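(* Let $n$ be a positive integer. Then $\mathsf{QNAADT}(\mathsf{OMB}_n) = \Omega(n)$.
   Context: $\mathsf{OMB}_n:\{0,1\}^n\to\{0,1\}$ is defined by $\mathsf{OMB}_n(x)=1$ if $\max\{i\in[n]:x_i=0\}$ is odd and $0$ otherwise, with $\mathsf{OMB}_n(1^n)=0$. $\mathsf{AND}_S(x)=\prod_{i\in S}x_i$. A quantum non-adaptive AND decision tree of cost $c$ works on a state space $|S_1,\dots,S_c\rangle|b\rangle|w\rangle$ with $S_j\subseteq[n]$, $b\in\{0,1\}^c$ and an arbitrary workspace; it starts from an input-independent state $|\psi\rangle$, applies the oracle $O_x:|S_1,\dots,S_c\rangle|b_1,\dots,b_c\rangle|w\rangle\mapsto|S_1,\dots,S_c\rangle|b_1\oplus\mathsf{AND}_{S_1}(x),\dots,b_c\oplus\mathsf{AND}_{S_c}(x)\rangle|w\rangle$ once, and accepts with probability $\|\Pi O_x|\psi\rangle\|^2$ for a fixed projector $\Pi$. $\mathsf{QNAADT}(f)$ is the minimum cost of such a tree outputting $f(x)$ correctly with probability at least $2/3$ for every $x$. *)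

theory Defs
  imports Complex_Main
begin

text \<open>Inputs x in {0,1}^n are modelled as functions x :: nat => bool, only the
values on [n] = {1..n} being relevant; True encodes 1, False encodes 0.
Boolean functions f : {0,1}^n -> {0,1} are modelled as (nat => bool) => bool.\<close>

definition OMB :: "nat \<Rightarrow> (nat \<Rightarrow> bool) \<Rightarrow> bool" where
  "OMB n x = ((\<exists>i\<in>{1..n}. \<not> x i) \<and> odd (Max {i\<in>{1..n}. \<not> x i}))"

definition AND_S :: "nat set \<Rightarrow> (nat \<Rightarrow> bool) \<Rightarrow> bool" where
  "AND_S S x = (\<forall>i\<in>S. x i)"

text \<open>Computational basis states |S_1,...,S_c>|b>|w>, workspace w \<in> {0..<m}.\<close>
type_synonym qbasis = "nat set list \<times> bool list \<times> nat"

definition qbasis_set :: "nat \<Rightarrow> nat \<Rightarrow> nat \<Rightarrow> qbasis set" where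
  "qbasis_set n c m = {(Ss, b, w). length Ss = c \<and> (\<forall>S\<in>set Ss. S \<subseteq> {1..n})
      \<and> length b = c \<and> w < m}"

text \<open>The oracle O_x permutes basis states (it is an involution).\<close>
definition oracle_map :: "(nat \<Rightarrow> bool) \<Rightarrow> qbasis \<Rightarrow> qbasis" where
  "oracle_map x u = (case u of (Ss, b, w) \<Rightarrow>
      (Ss, map2 (\<lambda>S bj. bj \<noteq> AND_S S x) Ss b, w))"

definition apply_oracle :: "(nat \<Rightarrow> bool) \<Rightarrow> (qbasis \<Rightarrow> complex) \<Rightarrow> qbasis \<Rightarrow> complex" where
  "apply_oracle x \<psi> = \<psi> \<circ> oracle_map x"

definition is_unit_state :: "qbasis set \<Rightarrow> (qbasis \<Rightarrow> complex) \<Rightarrow> bool" where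
  "is_unit_state B \<psi> = ((\<forall>u. u \<notin> B \<longrightarrow> \<psi> u = 0) \<and> (\<Sum>u\<in>B. (cmod (\<psi> u))\<^sup>2) = 1)"

definition is_projector :: "qbasis set \<Rightarrow> (qbasis \<Rightarrow> qbasis \<Rightarrow> complex) \<Rightarrow> bool" where
  "is_projector B P = ((\<forall>u\<in>B. \<forall>v\<in>B. P u v = cnj (P v u)) \<and>
      (\<forall>u\<in>B. \<forall>v\<in>B. (\<Sum>w\<in>B. P u w * P w v) = P u v))"

definition mat_apply :: "qbasis set \<Rightarrow> (qbasis \<Rightarrow> qbasis \<Rightarrow> complex) \<Rightarrow> (qbasis \<Rightarrow> complex) \<Rightarrow> qbasis \<Rightarrow> complex" where
  "mat_apply B P \<phi> u = (\<Sum>v\<in>B. P u v * \<phi> v)"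

definition accept_prob :: "qbasis set \<Rightarrow> (qbasis \<Rightarrow> qbasis \<Rightarrow> complex) \<Rightarrow> (qbasis \<Rightarrow> complex) \<Rightarrow> (nat \<Rightarrow> bool) \<Rightarrow> real" where
  "accept_prob B P \<psi> x = (\<Sum>u\<in>B. (cmod (mat_apply B P (apply_oracle x \<psi>) u))\<^sup>2)"

text \<open>A cost-c quantum non-adaptive AND decision tree computing f on n bits
(bounded error 1/3): accepting means output 1.\<close>
definition qnaadt_computes :: "nat \<Rightarrow> ((nat \<Rightarrow> bool) \<Rightarrow> bool) \<Rightarrow> nat \<Rightarrow> bool" where
  "qnaadt_computes n f c = (\<exists>m \<psi> P.
      is_unit_state (qbasis_set n c m) \<psi> \<and> is_projector (qbasis_set n c m) P \<and>
      (\<forall>x. (f x \<longrightarrow> accept_prob (qbasis_set n c m) P \<psi> x \<ge> 2/3) \<and>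
           (\<not> f x \<longrightarrow> accept_prob (qbasis_set n c m) P \<psi> x \<le> 1/3)))"

definition QNAADT :: "nat \<Rightarrow> ((nat \<Rightarrow> bool) \<Rightarrow> bool) \<Rightarrow> nat" where
  "QNAADT n f = (LEAST c. qnaadt_computes n f c)"

end

theory Submission
  imports Defs
begin

text \<open>Hybrid argument. Let x_k be the input that is 0 on 1..k and 1 beyond k. Since OMB_n
alternates along x_0, ..., x_n, for every k < n the states O_{x_k} psi and O_{x_{k+1}} psi are
accepted with probabilities on opposite sides of the bounded-error gap, which forces their squared
distance to be at least 1/18. On the other hand O_{x_k} and O_{x_{k+1}} act differently only on
basis states having a query set with least element k+1, and a basis state with c query sets has
at most c such k; so these distances add up to at most 4c. Hence n/18 <= 4c.
Since QNAADT is a least cost, we also need some tree computing OMB_n at all, for which querying the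
n singletons {i} suffices.\<close>

definition norm2_on :: "qbasis set \<Rightarrow> (qbasis \<Rightarrow> complex) \<Rightarrow> real" where
  "norm2_on B v = (\<Sum>u\<in>B. (cmod (v u))\<^sup>2)"

definition inner_on :: "qbasis set \<Rightarrow> (qbasis \<Rightarrow> complex) \<Rightarrow> (qbasis \<Rightarrow> complex) \<Rightarrow> complex" where
  "inner_on B v w = (\<Sum>u\<in>B. cnj (v u) * w u)"

lemma norm2_on_nonneg: "0 \<le> norm2_on B v"
  by (simp add: norm2_on_def sum_nonneg)

lemma norm2_on_diff_commute: "norm2_on B (\<lambda>u. v u - w u) = norm2_on B (\<lambda>u. w u - v u)"
  by (simp add: norm2_on_def norm_minus_commute)

lemma of_real_norm2_on: "complex_of_real (norm2_on B v) = inner_on B v v"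
  unfolding norm2_on_def inner_on_def of_real_sum complex_norm_square by (simp add: mult.commute)

lemma inner_on_diff_diff:
  "inner_on B (\<lambda>u. v u - w u) (\<lambda>u. v u - w u) =
     inner_on B v v - inner_on B v w - inner_on B w v + inner_on B w w"
proof -
  have "cnj (v u - w u) * (v u - w u) =
      cnj (v u) * v u - cnj (v u) * w u - cnj (w u) * v u + cnj (w u) * w u" for u
    by (simp add: ring_distribs)
  then show ?thesis
    by (simp add: inner_on_def sum.distrib sum_subtractf)
qed

lemma mat_apply_diff: "mat_apply B P (\<lambda>u. v u - w u) u = mat_apply B P v u - mat_apply B P w u"
  by (simp add: mat_apply_def algebra_simps sum_subtractf)

lemma projector_adjoint:
  assumes "is_projector B P"
  shows "inner_on B (mat_apply B P v) w = inner_on B v (mat_apply B P w)"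
proof -
  have herm: "cnj (P u u') = P u' u" if "u \<in> B" "u' \<in> B" for u u'
    using assms that unfolding is_projector_def by fastforce
  have "inner_on B (mat_apply B P v) w = (\<Sum>u\<in>B. \<Sum>u'\<in>B. cnj (v u') * P u' u * w u)"
    unfolding inner_on_def mat_apply_def cnj_sum complex_cnj_mult sum_distrib_right
    by (intro sum.cong refl) (simp add: herm mult_ac)
  also have "\<dots> = (\<Sum>u'\<in>B. \<Sum>u\<in>B. cnj (v u') * P u' u * w u)"
    by (rule sum.swap)
  also have "\<dots> = inner_on B v (mat_apply B P w)"
    unfolding inner_on_def mat_apply_def sum_distrib_left by (simp add: mult_ac)
  finally show ?thesis .
qed

lemma projector_idempotent:
  assumes "is_projector B P" "u \<in> B"
  shows "mat_apply B P (mat_apply B P v) u = mat_apply B P v u"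
proof -
  have idem: "(\<Sum>w\<in>B. P u w * P w x) = P u x" if "x \<in> B" for x
    using assms that unfolding is_projector_def by blast
  have "mat_apply B P (mat_apply B P v) u = (\<Sum>w\<in>B. \<Sum>x\<in>B. P u w * P w x * v x)"
    unfolding mat_apply_def sum_distrib_left by (simp only: mult.assoc)
  also have "\<dots> = (\<Sum>x\<in>B. (\<Sum>w\<in>B. P u w * P w x) * v x)"
    unfolding sum_distrib_right by (rule sum.swap)
  also have "\<dots> = mat_apply B P v u"
    unfolding mat_apply_def by (intro sum.cong refl) (simp add: idem)
  finally show ?thesis .
qed

lemma projector_pythagoras:
  assumes "is_projector B P"
  shows "norm2_on B v = norm2_on B (mat_apply B P v) + norm2_on B (\<lambda>u. v u - mat_apply B P v u)"
proof -
  let ?Pv = "mat_apply B P v"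
  have "inner_on B ?Pv ?Pv = inner_on B v (mat_apply B P ?Pv)"
    by (rule projector_adjoint[OF assms])
  also have "\<dots> = inner_on B v ?Pv"
    unfolding inner_on_def by (intro sum.cong refl) (simp add: projector_idempotent[OF assms])
  finally have "inner_on B ?Pv ?Pv = inner_on B v ?Pv" .
  moreover have "inner_on B ?Pv v = inner_on B v ?Pv"
    by (rule projector_adjoint[OF assms])
  ultimately have "complex_of_real (norm2_on B (\<lambda>u. v u - ?Pv u))
      = complex_of_real (norm2_on B v - norm2_on B ?Pv)"
    by (simp add: of_real_norm2_on inner_on_diff_diff)
  then have "norm2_on B (\<lambda>u. v u - ?Pv u) = norm2_on B v - norm2_on B ?Pv"
    by (simp only: of_real_eq_iff)
  then show ?thesis
    by simp
qed

corollary projector_norm2_le: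
  "is_projector B P \<Longrightarrow> norm2_on B (mat_apply B P v) \<le> norm2_on B v"
  using projector_pythagoras[of B P v] norm2_on_nonneg[of B "\<lambda>u. v u - mat_apply B P v u"]
  by linarith

lemma norm_sq_le_weighted:
  fixes a b :: "'a::real_normed_vector"
  shows "(norm a)\<^sup>2 \<le> 3/2 * (norm b)\<^sup>2 + 3 * (norm (a - b))\<^sup>2"
proof -
  have "norm a \<le> norm b + norm (a - b)"
    using norm_triangle_ineq[of b "a - b"] by simp
  then have "(norm a)\<^sup>2 \<le> (norm b + norm (a - b))\<^sup>2"
    by (simp add: power_mono)
  also have "\<dots> \<le> 3/2 * (norm b)\<^sup>2 + 3 * (norm (a - b))\<^sup>2"
    using zero_le_power2[of "norm b - 2 * norm (a - b)"]
    by (simp add: power2_eq_square algebra_simps)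
  finally show ?thesis .
qed

lemma norm_diff_sq_le:
  fixes a b :: "'a::real_normed_vector"
  shows "(norm (a - b))\<^sup>2 \<le> 2 * (norm a)\<^sup>2 + 2 * (norm b)\<^sup>2"
proof -
  have "(norm (a - b))\<^sup>2 \<le> (norm a + norm b)\<^sup>2"
    by (simp add: power_mono norm_triangle_ineq4)
  also have "\<dots> \<le> 2 * (norm a)\<^sup>2 + 2 * (norm b)\<^sup>2"
    using zero_le_power2[of "norm a - norm b"] by (simp add: power2_eq_square algebra_simps)
  finally show ?thesis .
qed

lemma projector_separation:
  assumes "is_projector B P"
    and "2/3 \<le> norm2_on B (mat_apply B P f)" and "norm2_on B (mat_apply B P g) \<le> 1/3"
  shows "1/18 \<le> norm2_on B (\<lambda>u. f u - g u)"
proof -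
  have "norm2_on B (mat_apply B P f)
      \<le> 3/2 * norm2_on B (mat_apply B P g) + 3 * norm2_on B (mat_apply B P (\<lambda>u. f u - g u))"
    unfolding norm2_on_def mat_apply_diff sum_distrib_left sum.distrib[symmetric]
    by (rule sum_mono) (rule norm_sq_le_weighted)
  also have "\<dots> \<le> 3/2 * norm2_on B (mat_apply B P g) + 3 * norm2_on B (\<lambda>u. f u - g u)"
    using projector_norm2_le[OF assms(1)] by simp
  finally show ?thesis
    using assms(2,3) by linarith
qed

lemma finite_qbasis_set: "finite (qbasis_set n c m)"
proof (rule finite_subset)
  show "qbasis_set n c m \<subseteq> {Ss. set Ss \<subseteq> Pow {1..n} \<and> length Ss = c} \<times>
      ({b. set b \<subseteq> (UNIV :: bool set) \<and> length b = c} \<times> {..<m})"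
    by (auto simp: qbasis_set_def)
  show "finite \<dots>"
    by (intro finite_cartesian_product finite_lists_length_eq) auto
qed

lemma map2_xor_involution:
  "length Ss = length b \<Longrightarrow> map2 (\<lambda>S bj. bj \<noteq> a S) Ss (map2 (\<lambda>S bj. bj \<noteq> a S) Ss b) = b"
  by (induction Ss b rule: list_induct2) auto

lemma oracle_map_involution: "u \<in> qbasis_set n c m \<Longrightarrow> oracle_map x (oracle_map x u) = u"
  using map2_xor_involution[of _ _ "\<lambda>S. AND_S S x"]
  by (auto simp: oracle_map_def qbasis_set_def)

lemma oracle_map_in_qbasis_set: "u \<in> qbasis_set n c m \<Longrightarrow> oracle_map x u \<in> qbasis_set n c m"
  by (auto simp: oracle_map_def qbasis_set_def)

lemma bij_betw_oracle_map: "bij_betw (oracle_map x) (qbasis_set n c m) (qbasis_set n c m)"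
  by (rule bij_betw_byWitness[where f' = "oracle_map x"])
    (auto simp: oracle_map_involution oracle_map_in_qbasis_set)

lemma sum_oracle_map_reindex:
  "(\<Sum>u\<in>qbasis_set n c m. F (oracle_map x u)) = (\<Sum>u\<in>qbasis_set n c m. F u)"
  using sum.reindex_bij_betw[OF bij_betw_oracle_map, of F] by simp

lemma fst_oracle_map [simp]: "fst (oracle_map x u) = fst u"
  by (simp add: oracle_map_def split: prod.splits)

lemma oracle_map_cong:
  "(\<And>S. S \<in> set (fst u) \<Longrightarrow> AND_S S x = AND_S S y) \<Longrightarrow> oracle_map x u = oracle_map y u"
  by (auto simp: oracle_map_def split: prod.splits intro!: map_cong dest: set_zip_leftD)

definition zeros_upto :: "nat \<Rightarrow> nat \<Rightarrow> bool" where
  "zeros_upto k i = (k < i)"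

lemma OMB_cong: "(\<And>i. i \<in> {1..n} \<Longrightarrow> x i = y i) \<Longrightarrow> OMB n x = OMB n y"
  unfolding OMB_def by (metis (mono_tags, lifting) Collect_cong)

lemma OMB_zeros_upto:
  assumes "k \<le> n"
  shows "OMB n (zeros_upto k) = odd k"
proof (cases "k = 0")
  case False
  have zeros: "{i \<in> {1..n}. \<not> zeros_upto k i} = {1..k}"
    using assms by (auto simp: zeros_upto_def)
  have "Max {1..k} = k"
    using False by (intro Max_eqI) auto
  with False assms show ?thesis
    unfolding OMB_def zeros by (auto simp: zeros_upto_def)
qed (simp add: OMB_def zeros_upto_def)

lemma AND_S_zeros_upto_Suc_neq:
  assumes "AND_S S (zeros_upto k) \<noteq> AND_S S (zeros_upto (Suc k))"
  shows "(LEAST i. i \<in> S) = Suc k"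
proof -
  have "AND_S S (zeros_upto (Suc k)) \<Longrightarrow> AND_S S (zeros_upto k)"
    by (auto simp: AND_S_def zeros_upto_def)
  with assms have "\<forall>i\<in>S. k < i" and "\<exists>i\<in>S. \<not> Suc k < i"
    unfolding AND_S_def zeros_upto_def by auto
  then have "Suc k \<in> S" and "\<forall>i\<in>S. Suc k \<le> i"
    by (metis Suc_lessI, auto)
  then show ?thesis
    by (intro Least_equality) auto
qed

definition separates :: "nat set list \<Rightarrow> nat \<Rightarrow> bool" where
  "separates Ss k = (\<exists>S\<in>set Ss. AND_S S (zeros_upto k) \<noteq> AND_S S (zeros_upto (Suc k)))"

lemma card_separates_le_length: "card {k \<in> K. separates Ss k} \<le> length Ss"
proof -
  have "{k \<in> K. separates Ss k} \<subseteq> (\<lambda>S. (LEAST i. i \<in> S) - 1) ` set Ss"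
  proof
    fix k
    assume "k \<in> {k \<in> K. separates Ss k}"
    then obtain S where "S \<in> set Ss" "(LEAST i. i \<in> S) = Suc k"
      using AND_S_zeros_upto_Suc_neq unfolding separates_def by blast
    then show "k \<in> (\<lambda>S. (LEAST i. i \<in> S) - 1) ` set Ss"
      by force
  qed
  then have "card {k \<in> K. separates Ss k} \<le> card ((\<lambda>S. (LEAST i. i \<in> S) - 1) ` set Ss)"
    by (intro card_mono) auto
  also have "\<dots> \<le> length Ss"
    using card_image_le[of "set Ss"] card_length[of Ss] by (meson finite_set le_trans)
  finally show ?thesis .
qed

lemma hybrid_step_bound:
  "norm2_on (qbasis_set n c m)
      (\<lambda>u. apply_oracle (zeros_upto k) \<psi> u - apply_oracle (zeros_upto (Suc k)) \<psi> u)
    \<le> 4 * (\<Sum>u\<in>qbasis_set n c m. of_bool (separates (fst u) k) * (cmod (\<psi> u))\<^sup>2)"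
proof -
  let ?B = "qbasis_set n c m" and ?w = "\<lambda>u. of_bool (separates (fst u) k) * (cmod (\<psi> u))\<^sup>2"
  have "(cmod (\<psi> (oracle_map (zeros_upto k) u) - \<psi> (oracle_map (zeros_upto (Suc k)) u)))\<^sup>2
      \<le> 2 * ?w (oracle_map (zeros_upto k) u) + 2 * ?w (oracle_map (zeros_upto (Suc k)) u)" for u
  proof (cases "separates (fst u) k")
    case False
    then have "oracle_map (zeros_upto k) u = oracle_map (zeros_upto (Suc k)) u"
      unfolding separates_def by (blast intro: oracle_map_cong)
    then show ?thesis
      by simp
  qed (simp add: norm_diff_sq_le)
  then have "norm2_on ?B
      (\<lambda>u. apply_oracle (zeros_upto k) \<psi> u - apply_oracle (zeros_upto (Suc k)) \<psi> u)
    \<le> (\<Sum>u\<in>?B. 2 * ?w (oracle_map (zeros_upto k) u) + 2 * ?w (oracle_map (zeros_upto (Suc k)) u))"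
    unfolding norm2_on_def apply_oracle_def by (intro sum_mono) simp
  also have "\<dots> = 4 * (\<Sum>u\<in>?B. ?w u)"
    unfolding sum.distrib sum_distrib_left[symmetric] sum_oracle_map_reindex[where F = ?w] by simp
  finally show ?thesis .
qed

lemma accept_prob_basis_state_diagonal:
  assumes "u0 \<in> qbasis_set n c m"
  shows "accept_prob (qbasis_set n c m) (\<lambda>u v. of_bool (u = v \<and> d u)) (\<lambda>u. of_bool (u = u0)) x
    = of_bool (d (oracle_map x u0))"
proof -
  let ?B = "qbasis_set n c m" and ?u1 = "oracle_map x u0"
  have u1: "?u1 \<in> ?B"
    using assms by (rule oracle_map_in_qbasis_set)
  have "apply_oracle x (\<lambda>u. of_bool (u = u0)) v = of_bool (v = ?u1)" if "v \<in> ?B" for v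
    using oracle_map_involution[OF that, of x] oracle_map_involution[OF assms, of x]
    by (auto simp: apply_oracle_def)
  then have "mat_apply ?B (\<lambda>u v. of_bool (u = v \<and> d u)) (apply_oracle x (\<lambda>u. of_bool (u = u0))) u
      = of_bool (u = ?u1 \<and> d ?u1)" for u
    using u1 finite_qbasis_set unfolding mat_apply_def by (simp add: if_distrib cong: sum.cong)
  then have "(cmod (mat_apply ?B (\<lambda>u v. of_bool (u = v \<and> d u))
      (apply_oracle x (\<lambda>u. of_bool (u = u0))) u))\<^sup>2 = (if u = ?u1 then of_bool (d ?u1) else 0)" for u
    by simp
  then show ?thesis
    using u1 finite_qbasis_set by (simp add: accept_prob_def)
qed

lemma qnaadt_computes_query_all_bits:
  assumes "\<And>x y. (\<And>i. i \<in> {1..n} \<Longrightarrow> x i = y i) \<Longrightarrow> f x = f y"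
  shows "qnaadt_computes n f n"
proof -
  define B where "B = qbasis_set n n 1"
  \<comment> \<open>Querying the singletons {1}, ..., {n} writes x itself into the answer register.\<close>
  define u0 where "u0 = (map (\<lambda>i. {Suc i}) [0..<n], replicate n False, 0::nat)"
  define d where "d u = f (\<lambda>i. fst (snd u) ! (i - 1))" for u :: qbasis
  define \<psi> where "\<psi> u = (of_bool (u = u0) :: complex)" for u :: qbasis
  define P where "P u v = (of_bool (u = v \<and> d u) :: complex)" for u v :: qbasis
  have u0: "u0 \<in> B"
    by (auto simp: u0_def B_def qbasis_set_def)
  have "is_unit_state B \<psi>"
    unfolding is_unit_state_def
  proof
    show "\<forall>u. u \<notin> B \<longrightarrow> \<psi> u = 0"
      using u0 by (auto simp: \<psi>_def)
    have "(cmod (\<psi> u))\<^sup>2 = (if u = u0 then 1 else 0)" for u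
      by (simp add: \<psi>_def)
    then show "(\<Sum>u\<in>B. (cmod (\<psi> u))\<^sup>2) = 1"
      using u0 finite_qbasis_set by (simp add: B_def)
  qed
  moreover have "is_projector B P"
    unfolding is_projector_def
  proof (intro conjI ballI)
    fix u v
    assume "u \<in> B" "v \<in> B"
    show "P u v = cnj (P v u)"
      by (auto simp: P_def)
    have "P u w * P w v = (if w = u then P u v else 0)" for w
      by (auto simp: P_def)
    then show "(\<Sum>w\<in>B. P u w * P w v) = P u v"
      using \<open>u \<in> B\<close> finite_qbasis_set by (simp add: B_def)
  qed
  moreover have "accept_prob B P \<psi> x = of_bool (f x)" for x
  proof -
    have "fst (snd (oracle_map x u0)) ! (i - 1) = x i" if "i \<in> {1..n}" for i
      using that by (auto simp: u0_def oracle_map_def AND_S_def)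
    then have "d (oracle_map x u0) = f x"
      unfolding d_def by (intro assms) auto
    then show ?thesis
      using accept_prob_basis_state_diagonal[OF u0[unfolded B_def], of d x]
      unfolding B_def P_def \<psi>_def by simp
  qed
  ultimately show ?thesis
    unfolding qnaadt_computes_def B_def by (intro exI[of _ 1] exI[of _ \<psi>] exI[of _ P]) auto
qed

lemma qnaadt_computes_OMB_lower_bound:
  assumes "qnaadt_computes n (OMB n) c"
  shows "real n \<le> 72 * real c"
proof -
  obtain m \<psi> P where unit: "is_unit_state (qbasis_set n c m) \<psi>"
    and proj: "is_projector (qbasis_set n c m) P"
    and correct: "\<forall>x. (OMB n x \<longrightarrow> accept_prob (qbasis_set n c m) P \<psi> x \<ge> 2/3) \<and>
      (\<not> OMB n x \<longrightarrow> accept_prob (qbasis_set n c m) P \<psi> x \<le> 1/3)"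
    using assms unfolding qnaadt_computes_def by blast
  define B where "B = qbasis_set n c m"
  define D where "D k = norm2_on B
    (\<lambda>u. apply_oracle (zeros_upto k) \<psi> u - apply_oracle (zeros_upto (Suc k)) \<psi> u)" for k
  have gap: "1/18 \<le> norm2_on B (\<lambda>u. apply_oracle x \<psi> u - apply_oracle y \<psi> u)"
    if "OMB n x" "\<not> OMB n y" for x y
    using projector_separation[OF proj, of "apply_oracle x \<psi>" "apply_oracle y \<psi>"] correct that
    by (simp add: B_def accept_prob_def norm2_on_def)
  have far: "1/18 \<le> D k" if "k < n" for k
    using that gap[of "zeros_upto k" "zeros_upto (Suc k)"] gap[of "zeros_upto (Suc k)" "zeros_upto k"]
    by (cases "odd k") (simp_all add: D_def OMB_zeros_upto norm2_on_diff_commute)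
  let ?h = "\<lambda>u. (cmod (\<psi> u))\<^sup>2"
  have "real n / 18 \<le> (\<Sum>k<n. D k)"
    using sum_mono[of "{..<n}" "\<lambda>_. 1/18" D] far by simp
  also have "\<dots> \<le> (\<Sum>k<n. 4 * (\<Sum>u\<in>B. of_bool (separates (fst u) k) * ?h u))"
    unfolding D_def B_def by (intro sum_mono hybrid_step_bound)
  also have "\<dots> = 4 * (\<Sum>u\<in>B. \<Sum>k<n. of_bool (separates (fst u) k) * ?h u)"
    by (simp only: sum_distrib_left[symmetric] sum.swap[of _ "{..<n}"])
  also have "\<dots> = 4 * (\<Sum>u\<in>B. ?h u * card {k \<in> {..<n}. separates (fst u) k})"
    by (simp add: Int_def mult.commute)
  also have "\<dots> \<le> 4 * (\<Sum>u\<in>B. ?h u * real c)"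
    using card_separates_le_length[of "{..<n}"]
    by (auto intro!: sum_mono mult_left_mono simp: B_def qbasis_set_def)
  also have "\<dots> = 4 * real c"
    using unit by (simp add: B_def is_unit_state_def sum_distrib_right[symmetric])
  finally show ?thesis
    by simp
qed

theorem theorem4p2:
  shows "\<exists>C::real > 0. \<forall>n::nat \<ge> 1. real (QNAADT n (OMB n)) \<ge> C * real n"
proof (intro exI[of _ "1/72"] conjI allI impI)
  fix n :: nat
  have "qnaadt_computes n (OMB n) n"
    by (rule qnaadt_computes_query_all_bits) (rule OMB_cong)
  then have "qnaadt_computes n (OMB n) (QNAADT n (OMB n))"
    unfolding QNAADT_def by (rule LeastI)
  from qnaadt_computes_OMB_lower_bound[OF this]
  show "1/72 * real n \<le> real (QNAADT n (OMB n))"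
    by simp
qed simp

end
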